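(* Let $r = 2^4 + 2^3 + 2 + 1 = 27$ and $p = 2^{64} \oplus r$. As $x$ ranges over all nonnegative integers of degree less than $128$ (i.e. $x < 2^{128}$), the quantity $\big((z \div 2^{64}) \star 2^{64}\big) \bmod p$, where $z = (x \div 2^{64}) \star r$, takes only $16$ possible values.
   Context: All operations are carry-less. For nonnegative integers $a,b$, with $a_i$ the $i$-th least significant bit of $a$, the carry-less product $a \star b$ is the integer whose $i$-th bit is $\bigoplus_{k=0}^{i} a_{i-k} b_k$; $\oplus$ is bitwise XOR. For a positive integer $x$, $\mathrm{degree}(x)$ is the index (starting at $0$) of its most significant nonzero bit. For integers $a$ and $b \neq 0$ there are unique integers $\alpha,\beta$ with $a = \alpha \star b \oplus \beta$ and $\beta = 0$ or $\mathrm{degree}(\beta) < \mathrm{degree}(b)$; one writes $a \div b = \alpha$ and $a \bmod b = \beta$. Precedence: $\star$, $\bmod$, $\div$ first, then $\oplus$. *)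

theory Defs
  imports Main
begin

text \<open>Carry-less product on nonnegative integers: bit i of clmul a b is the XOR over
k \<le> i of a_(i-k) b_k; computed as XOR of shifted copies of a, one per set bit of b.\<close>
fun clmul :: "nat \<Rightarrow> nat \<Rightarrow> nat" where
  "clmul a b = (if b = 0 then 0
     else xor (if odd b then a else 0) (clmul (2 * a) (b div 2)))"

declare clmul.simps[simp del]

definition degree :: "nat \<Rightarrow> nat" where
  "degree x = (GREATEST i. bit x i)"

definition cldiv :: "nat \<Rightarrow> nat \<Rightarrow> nat" where
  "cldiv a b = (THE \<alpha>. \<exists>\<beta>. a = xor (clmul \<alpha> b) \<beta> \<and> (\<beta> = 0 \<or> degree \<beta> < degree b))"

definition clmod :: "nat \<Rightarrow> nat \<Rightarrow> nat" where
  "clmod a b = (THE \<beta>. \<exists>\<alpha>. a = xor (clmul \<alpha> b) \<beta> \<and> (\<beta> = 0 \<or> degree \<beta> < degree b))"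

end

theory Submission
  imports Defs
begin

text \<open>Carry-less division and multiplication by \<open>2^64\<close> are plain shifts. Write the input
as \<open>x = t \<cdot> 2^124 + s\<close> with \<open>t < 16\<close>. Since \<open>r\<close> has degree 4, the high half of
\<open>(x div 2^64) \<star> r\<close> only sees the top bits of \<open>x\<close>: it equals \<open>w = (t \<star> r) div 2^4\<close>, a
number of degree below 4. Modulo \<open>p = 2^64 \<oplus> r\<close> one has \<open>2^64 \<equiv> r\<close>, and \<open>w \<star> r\<close> has
degree below 8, so the final remainder is \<open>w \<star> r\<close>. The quantity is therefore a function of
the 4-bit number \<open>t\<close>, and evaluating it shows that its 16 values are distinct.\<close>

lemma xor_left_self [simp]: "xor a (xor a b) = (b::nat)"
  by (simp flip: xor.assoc)

lemma xor_less_power2: "(x::nat) < 2^k \<Longrightarrow> y < 2^k \<Longrightarrow> xor x y < 2^k"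
  by (metis take_bit_nat_eq_self_iff take_bit_xor)

lemma xor_div_power2_eq: "(y::nat) < 2^k \<Longrightarrow> xor x y div 2^k = x div 2^k"
  by (metis drop_bit_eq_div drop_bit_xor div_less xor.right_neutral)

lemma xor_mult_power2_eq_add: "(r::nat) < 2^k \<Longrightarrow> xor (q * 2^k) r = q * 2^k + r"
proof -
  assume "r < 2^k"
  then have "\<not> bit r n" if "k \<le> n" for n
    using that by (metis bit_take_bit_iff not_le take_bit_nat_eq_self_iff)
  then have "and (q * 2^k) r = 0"
    by (intro bit_eqI) (auto simp: bit_and_iff bit_push_bit_iff_nat simp flip: push_bit_eq_mult)
  then show ?thesis
    by (simp add: disjunctive_add_eq_xor)
qed

lemma xor_mult_power2: "xor (x * 2^k) (y * 2^k) = xor x (y::nat) * 2^k"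
  by (metis push_bit_eq_mult push_bit_xor)

lemma power2_le_xor: "2^n \<le> (x::nat) \<Longrightarrow> y < 2^n \<Longrightarrow> 2^n \<le> xor x y"
  by (metis xor_div_power2_eq div_greater_zero_iff zero_less_numeral zero_less_power)

lemma xor_eq_xor_swap: "xor x y = xor x' y' \<Longrightarrow> xor x x' = xor y (y'::nat)"
  by (auto simp: bit_eq_iff bit_xor_iff)

lemma degree_eqI: "2^n \<le> (x::nat) \<Longrightarrow> x < 2^Suc n \<Longrightarrow> degree x = n"
  unfolding degree_def
proof (rule Greatest_equality)
  assume lower: "2^n \<le> x" and upper: "x < 2^Suc n"
  then have "x div 2^n = 1"
    by (simp add: div_nat_eqI)
  then show "bit x n"
    by (simp add: bit_nat_def)
  fix i
  assume "bit x i"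
  then have "2^i \<le> x"
    by (metis bit_nat_def div_less even_zero not_le)
  with upper have "(2::nat)^i < 2^Suc n"
    by linarith
  then show "i \<le> n"
    using power_less_imp_less_exp[of "2::nat" i "Suc n"] by simp
qed

lemma degree_bounds: "(x::nat) \<noteq> 0 \<Longrightarrow> 2^degree x \<le> x \<and> x < 2^Suc (degree x)"
proof -
  assume "x \<noteq> 0"
  then obtain n where bounds: "2^n \<le> x" "x < 2^Suc n"
    using ex_power_ivl1[of 2 x] by auto
  then have "degree x = n"
    by (rule degree_eqI)
  with bounds show ?thesis
    by simp
qed

lemma less_power2_iff_degree: "(x::nat) < 2^n \<longleftrightarrow> x = 0 \<or> degree x < n"
proof (cases "x = 0")
  case False
  then have lower: "2^degree x \<le> x" and upper: "x < 2^Suc (degree x)"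
    using degree_bounds by auto
  show ?thesis
  proof
    assume "x < 2^n"
    with lower have "(2::nat)^degree x < 2^n"
      by linarith
    then show "x = 0 \<or> degree x < n"
      using power_less_imp_less_exp[of "2::nat" "degree x" n] by simp
  next
    assume "x = 0 \<or> degree x < n"
    with False have "(2::nat)^Suc (degree x) \<le> 2^n"
      using power_increasing[of "Suc (degree x)" n "2::nat"] by simp
    with upper show "x < 2^n"
      by linarith
  qed
qed simp

lemma degree_power2 [simp]: "degree (2^k) = k"
  by (rule degree_eqI) simp_all

lemma clmul_0_right [simp]: "clmul a 0 = 0"
  by (subst clmul.simps) simp

lemma clmul_0_left [simp]: "clmul 0 b = 0"
  by (induction b rule: less_induct) (subst clmul.simps, simp)

lemma clmul_rec: "clmul a b = xor (if odd b then a else 0) (clmul (2 * a) (b div 2))"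
  by (cases "b = 0") (simp, subst clmul.simps, simp)

lemma clmul_power2_right: "clmul a (2^k) = a * 2^k"
proof (induction k arbitrary: a)
  case 0
  then show ?case
    by (subst clmul_rec) simp
next
  case (Suc k)
  then show ?case
    by (subst clmul_rec) simp
qed

lemma clmul_mult_power2_left: "clmul (a * 2^k) b = clmul a b * 2^k"
proof (induction a b rule: clmul.induct)
  case (1 a b)
  show ?case
  proof (cases "b = 0")
    case False
    have "clmul (a * 2^k) b = xor ((if odd b then a else 0) * 2^k) (clmul (2 * a * 2^k) (b div 2))"
      by (simp add: clmul_rec[of "a * 2^k"] mult.assoc)
    also have "\<dots> = xor ((if odd b then a else 0) * 2^k) (clmul (2 * a) (b div 2) * 2^k)"
      using "1" False by simp
    also have "\<dots> = clmul a b * 2^k"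
      by (simp add: xor_mult_power2 clmul_rec[of a b])
    finally show ?thesis .
  qed simp
qed

lemma clmul_xor_left: "clmul (xor a a') b = xor (clmul a b) (clmul a' b)"
proof (induction a b arbitrary: a' rule: clmul.induct)
  case (1 a b)
  show ?case
  proof (cases "b = 0")
    case False
    have double: "2 * xor a a' = xor (2 * a) (2 * a')"
      using xor_mult_power2[of a 1 a'] by (simp add: mult.commute)
    have "clmul (xor a a') b =
        xor (if odd b then xor a a' else 0) (xor (clmul (2 * a) (b div 2)) (clmul (2 * a') (b div 2)))"
      using "1" False by (simp add: clmul_rec[of "xor a a'"] double)
    then show ?thesis
      by (simp add: clmul_rec[of a b] clmul_rec[of a' b] xor.assoc xor.left_commute)
  qed simp
qed

lemma clmul_xor_right: "clmul a (xor b b') = xor (clmul a b) (clmul a b')"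
proof (induction b arbitrary: a b' rule: less_induct)
  case (less b)
  show ?case
  proof (cases "b = 0")
    case False
    have half: "xor b b' div 2 = xor (b div 2) (b' div 2)"
      by (metis drop_bit_eq_div drop_bit_xor power_one_right)
    have "clmul a (xor b b') =
        xor (if odd b \<noteq> odd b' then a else 0) (xor (clmul (2 * a) (b div 2)) (clmul (2 * a) (b' div 2)))"
      using less False by (simp add: clmul_rec[of a "xor b b'"] half even_xor_iff)
    then show ?thesis
      by (simp add: clmul_rec[of a b] clmul_rec[of a b'] xor.assoc xor.left_commute)
  qed simp
qed

lemma clmul_power2_bounds:
  "2^m \<le> a \<Longrightarrow> a < 2^Suc m \<Longrightarrow> 2^n \<le> b \<Longrightarrow> b < 2^Suc n \<Longrightarrow>
    2^(m + n) \<le> clmul a b \<and> clmul a b < 2^Suc (m + n)"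
proof (induction a b arbitrary: m n rule: clmul.induct)
  case (1 a b)
  show ?case
  proof (cases n)
    case 0
    with "1.prems" have "b = 1"
      by simp
    then have "clmul a b = a"
      using clmul_power2_right[of a 0] by simp
    with "1.prems" "0" show ?thesis
      by simp
  next
    case (Suc n')
    from "1.prems" Suc have "b \<noteq> 0" "2^n' \<le> b div 2" "b div 2 < 2^Suc n'"
      by (auto simp: less_mult_imp_div_less)
    moreover from "1.prems" have "2^Suc m \<le> 2 * a" "2 * a < 2^Suc (Suc m)"
      by auto
    ultimately have high: "2^(m + n) \<le> clmul (2 * a) (b div 2)" "clmul (2 * a) (b div 2) < 2^Suc (m + n)"
      using "1.IH"[of "Suc m" n'] Suc by simp_all
    define y where "y = (if odd b then a else 0)"
    have low: "y < 2^(m + n)"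
    proof -
      have "(2::nat)^Suc m \<le> 2^(m + n)"
        using Suc by (intro power_increasing) auto
      with "1.prems"(2) show ?thesis
        by (simp add: y_def)
    qed
    then have "y < 2^Suc (m + n)"
      by simp
    then have "2^(m + n) \<le> xor (clmul (2 * a) (b div 2)) y \<and>
        xor (clmul (2 * a) (b div 2)) y < 2^Suc (m + n)"
      using power2_le_xor[OF high(1) low] xor_less_power2[OF high(2)] by blast
    then show ?thesis
      by (simp add: clmul_rec[of a b] y_def xor.commute)
  qed
qed

lemma degree_clmul: "a \<noteq> 0 \<Longrightarrow> b \<noteq> 0 \<Longrightarrow> degree (clmul a b) = degree a + degree b"
  using clmul_power2_bounds degree_bounds degree_eqI by meson

lemma clmul_eq_0_iff [simp]: "clmul a b = 0 \<longleftrightarrow> a = 0 \<or> b = 0"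
proof (cases "a = 0 \<or> b = 0")
  case False
  then have "2^(degree a + degree b) \<le> clmul a b"
    using clmul_power2_bounds degree_bounds by blast
  then show ?thesis
    using False by (auto dest: order_trans[OF one_le_power[of 2], rotated])
qed auto

lemma clmul_less_power2: "a < 2^m \<Longrightarrow> b < 2^Suc n \<Longrightarrow> clmul a b < 2^(m + n)"
proof (cases "a = 0 \<or> b = 0")
  case False
  assume "a < 2^m" "b < 2^Suc n"
  with False have "degree a < m" "degree b < Suc n"
    by (simp_all only: less_power2_iff_degree) simp_all
  then have "degree a + degree b < m + n"
    by simp
  with False show ?thesis
    by (simp add: less_power2_iff_degree degree_clmul)
qed auto

lemma clmul_xor_remainder_unique:
  assumes "b \<noteq> 0"
    and eq: "xor (clmul \<alpha> b) \<beta> = xor (clmul \<alpha>' b) \<beta>'"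
    and "\<beta> < 2^degree b" "\<beta>' < 2^degree b"
  shows "\<alpha> = \<alpha>' \<and> \<beta> = \<beta>'"
proof -
  have "clmul (xor \<alpha> \<alpha>') b = xor \<beta> \<beta>'"
    unfolding clmul_xor_left by (rule xor_eq_xor_swap[OF eq])
  also have "\<dots> < 2^degree b"
    using assms(3,4) by (rule xor_less_power2)
  finally have "clmul (xor \<alpha> \<alpha>') b = 0 \<or> degree (clmul (xor \<alpha> \<alpha>') b) < degree b"
    by (simp only: less_power2_iff_degree)
  with assms(1) have "xor \<alpha> \<alpha>' = 0"
    by (cases "xor \<alpha> \<alpha>' = 0") (auto simp: degree_clmul)
  then have "\<alpha> = \<alpha>'"
    using xor_left_self[of \<alpha> \<alpha>'] by simp
  with eq show ?thesis
    using xor_left_self[of "clmul \<alpha> b"] by metis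
qed

lemma cldiv_eqI:
  "b \<noteq> 0 \<Longrightarrow> \<beta> < 2^degree b \<Longrightarrow> a = xor (clmul \<alpha> b) \<beta> \<Longrightarrow> cldiv a b = \<alpha>"
  unfolding cldiv_def
  by (rule the_equality) (use clmul_xor_remainder_unique less_power2_iff_degree in blast)+

lemma clmod_eqI:
  "b \<noteq> 0 \<Longrightarrow> \<beta> < 2^degree b \<Longrightarrow> a = xor (clmul \<alpha> b) \<beta> \<Longrightarrow> clmod a b = \<beta>"
  unfolding clmod_def
  by (rule the_equality) (use clmul_xor_remainder_unique less_power2_iff_degree in blast)+

lemma cldiv_power2: "cldiv x (2^k) = x div 2^k"
proof (rule cldiv_eqI)
  show "x = xor (clmul (x div 2^k) (2^k)) (x mod 2^k)"
    using div_mult_mod_eq[of x "2^k"] by (simp add: clmul_power2_right xor_mult_power2_eq_add)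
qed simp_all

lemma clmod_clmul_xor:
  "b \<noteq> 0 \<Longrightarrow> clmul w r < 2^degree b \<Longrightarrow> clmod (clmul w (xor b r)) b = clmul w r"
  by (rule clmod_eqI) (simp_all add: clmul_xor_right)

lemma degree_power2_xor: "r < 2^k \<Longrightarrow> degree (xor (2^k) r) = k"
proof (rule degree_eqI)
  assume "r < 2^k"
  then show "2^k \<le> xor (2^k) r"
    by (simp add: power2_le_xor)
  have "(2::nat)^k < 2^Suc k" "r < 2^Suc k"
    using \<open>r < 2^k\<close> by simp_all
  then show "xor (2^k) r < 2^Suc k"
    by (rule xor_less_power2)
qed

lemma clmod_clmul_power2:
  assumes "r < 2^k" "clmul w r < 2^k"
  shows "clmod (clmul w (2^k)) (xor (2^k) r) = clmul w r"
proof -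
  have "xor (xor (2^k) r) r = 2^k"
    by (simp add: xor.assoc)
  moreover have "xor (2^k) r \<noteq> 0"
  proof
    assume "xor (2^k) r = 0"
    with power2_le_xor[of k "2^k" r] assms(1) show False
      by simp
  qed
  ultimately show ?thesis
    using assms clmod_clmul_xor[of "xor (2^k) r" w r] by (simp add: degree_power2_xor)
qed

lemma clmul_div_power2_eq:
  assumes "b < 2^Suc d"
  shows "clmul a b div 2^(j + d) = clmul (a div 2^j) b div 2^d"
proof -
  have "a = xor (a div 2^j * 2^j) (a mod 2^j)"
    using div_mult_mod_eq[of a "2^j"] by (simp add: xor_mult_power2_eq_add)
  then have "clmul a b = xor (clmul (a div 2^j) b * 2^j) (clmul (a mod 2^j) b)"
    by (metis clmul_xor_left clmul_mult_power2_left)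
  moreover have "clmul (a mod 2^j) b < 2^(j + d)"
    using assms by (intro clmul_less_power2) simp_all
  ultimately have "clmul a b div 2^(j + d) = clmul (a div 2^j) b * 2^j div 2^(j + d)"
    by (simp add: xor_div_power2_eq)
  also have "\<dots> = clmul (a div 2^j) b div 2^d"
    by (simp add: power_add div_mult2_eq)
  finally show ?thesis .
qed

lemma clmod_high_part_eq:
  assumes r: "r < 2^Suc d" and k: "2 * d \<le> k" "0 < k" and x: "x < 2^(2 * k)"
  shows "clmod (clmul (cldiv (clmul (cldiv x (2^k)) r) (2^k)) (2^k)) (xor (2^k) r) =
    clmul (clmul (x div 2^(2 * k - d)) r div 2^d) r"
proof -
  define t where "t = x div 2^(2 * k - d)"
  define w where "w = clmul t r div 2^d"
  have "t < 2^d"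
    using x k by (simp add: t_def less_mult_imp_div_less flip: power_add)
  then have "clmul t r < 2^(d + d)"
    using r by (rule clmul_less_power2)
  then have "w < 2^d"
    by (simp add: w_def power_add less_mult_imp_div_less)
  then have "clmul w r < 2^(d + d)"
    using r by (rule clmul_less_power2)
  also have "\<dots> \<le> 2^k"
    using k by (intro power_increasing) auto
  finally have small: "clmul w r < 2^k" .
  moreover have "r < 2^k"
    using r k power_increasing[of "Suc d" k "2::nat"] by linarith
  ultimately have "clmod (clmul w (2^k)) (xor (2^k) r) = clmul w r"
    by (rule clmod_clmul_power2[rotated])
  moreover have "clmul (x div 2^k) r div 2^k = w"
  proof -
    have "2 * k - d = k + (k - d)" "k - d + d = k"
      using k by simp_all
    then have "x div 2^k div 2^(k - d) = t"
      unfolding t_def by (simp only: div_mult2_eq power_add)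
    then show ?thesis
      using clmul_div_power2_eq[OF r, of "x div 2^k" "k - d"] \<open>k - d + d = k\<close>
      by (simp add: w_def)
  qed
  ultimately show ?thesis
    by (simp add: cldiv_power2 w_def t_def)
qed

lemma clmod_high_part_values:
  assumes "r < 2^Suc d" "2 * d \<le> k" "0 < k"
  shows "{clmod (clmul (cldiv z (2^k)) (2^k)) (xor (2^k) r) | z x.
      x < 2^(2 * k) \<and> z = clmul (cldiv x (2^k)) r} =
    (\<lambda>t. clmul (clmul t r div 2^d) r) ` {..<2^d}"
proof (intro equalityI subsetI)
  fix v
  assume "v \<in> {clmod (clmul (cldiv z (2^k)) (2^k)) (xor (2^k) r) | z x.
      x < 2^(2 * k) \<and> z = clmul (cldiv x (2^k)) r}"
  then obtain x where x: "x < 2^(2 * k)"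
    and v: "v = clmod (clmul (cldiv (clmul (cldiv x (2^k)) r) (2^k)) (2^k)) (xor (2^k) r)"
    by blast
  have "x div 2^(2 * k - d) < 2^d"
    using x assms by (simp add: less_mult_imp_div_less flip: power_add)
  with v show "v \<in> (\<lambda>t. clmul (clmul t r div 2^d) r) ` {..<2^d}"
    using clmod_high_part_eq[OF assms x] by auto
next
  fix v
  assume "v \<in> (\<lambda>t. clmul (clmul t r div 2^d) r) ` {..<2^d}"
  then obtain t where "t < 2^d" and v: "v = clmul (clmul t r div 2^d) r"
    by auto
  moreover have "(2::nat)^d * 2^(2 * k - d) = 2^(2 * k)"
    using assms(2) by (simp flip: power_add)
  ultimately have x: "t * 2^(2 * k - d) < 2^(2 * k)"
    by (metis mult_less_cancel2 zero_less_numeral zero_less_power)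
  have "v = clmod (clmul (cldiv (clmul (cldiv (t * 2^(2 * k - d)) (2^k)) r) (2^k)) (2^k))
      (xor (2^k) r)"
    using clmod_high_part_eq[OF assms x] v by simp
  with x show "v \<in> {clmod (clmul (cldiv z (2^k)) (2^k)) (xor (2^k) r) | z x.
      x < 2^(2 * k) \<and> z = clmul (cldiv x (2^k)) r}"
    by blast
qed

theorem lemma7:
  fixes r p :: nat
  assumes "r = 2^4 + 2^3 + 2 + 1"
    and "p = xor (2^64) r"
  shows "card {clmod (clmul (cldiv z (2^64)) (2^64)) p | z x :: nat.
                 x < 2^128 \<and> z = clmul (cldiv x (2^64)) r} = 16"
proof -
  have "r = 27" "(27::nat) < 2^Suc 4"
    using assms(1) by simp_all
  then have "{clmod (clmul (cldiv z (2^64)) (2^64)) p | z x :: nat.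
                 x < 2^128 \<and> z = clmul (cldiv x (2^64)) r} =
      (\<lambda>t. clmul (clmul t 27 div 2^4) 27) ` {..<2^4}"
    using clmod_high_part_values[of 27 4 64] assms(2) by simp
  also have "card \<dots> = 16"
    by (simp add: lessThan_nat_numeral clmul.simps)
  finally show ?thesis .
qed

end
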